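(* Let $a,b\in\mathbb{Q}_3$ with $\gamma(a)=1$, $\gamma(b)=0$, and let $x=\sum_{t\ge0}x_t3^t\in\mathbb{Z}_3^*$ be such that $A_k\equiv0\pmod3$ for all $k\in\mathbb{N}$. Then $x$ is a solution of $x^3+ax=b$ if and only if the digits of $x$ satisfy the system of congruences $$x_0^3\equiv b_0\pmod3,\qquad x_0a_0+M_1(x_0)\equiv b_1\pmod3,$$ and for every $j\ge1$, $$x_{j-1}a_j+x_{j-2}a_{j+1}+\dots+x_0a_{2j-1}+S_{2j}^j+M_{2j}(x_0,\dots,x_{j-1})\equiv b_{2j}\pmod3,$$ $$(A_j-x_0x_j)x_j+x_{j-1}a_{j+1}+x_{j-2}a_{j+2}+\dots+x_0a_{2j}+S_{2j+1}^j+M_{2j+1}(x_0,\dots,x_{j-1})\equiv b_{2j+1}\pmod3,$$ where the integers $M$ are defined by $$3M_1(x_0)=x_0^3-b_0,\qquad 3M_2(x_0)=x_0a_0+M_1(x_0)-b_1,$$ $$3M_{2j+1}(x_0,\dots,x_{j-1})=x_{j-1}a_j+\dots+x_0a_{2j-1}+S_{2j}^j+M_{2j}(x_0,\dots,x_{j-1})-b_{2j},$$ $$3M_{2j+2}(x_0,\dots,x_j)=(A_j-x_0x_j)x_j+x_{j-1}a_{j+1}+\dots+x_0a_{2j}+S_{2j+1}^j+M_{2j+1}(x_0,\dots,x_{j-1})-b_{2j+1}.$$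
   Context: Write $a=3^{\gamma(a)}(a_0+a_13+a_23^2+\dots)$, $b=3^{\gamma(b)}(b_0+b_13+b_23^2+\dots)$ in canonical form, with digits $a_j,b_j\in\{0,1,2\}$, $a_0,b_0\ne0$, $\gamma(a),\gamma(b)\in\mathbb{Z}$. $\mathbb{Z}_3^*$ is the set of $3$-adic units; $x\in\mathbb{Z}_3^*$ is written $x=x_0+x_13+x_23^2+\dots$ with $x_j\in\{0,1,2\}$, $x_0\ne0$. Define $A_0=x_0^2+a_0$ and, for $k\ge1$, $A_k=\frac{A_{k-1}}{3}+a_k+R_k$ with $R_k=\sum_{j=0}^kx_jx_{k-j}$. For $j\le k$, $P_k^j(x_0,\dots,x_{j-1})=\sum\frac{6}{m_0!\cdots m_{j-1}!}x_0^{m_0}\cdots x_{j-1}^{m_{j-1}}$, the sum over nonnegative integers $m_0,\dots,m_{j-1}$ with $\sum_{i=0}^{j-1}m_i=3$ and $\sum_{i=1}^{j-1}im_i=k$. For $s$ a positive integer define $$S_j^i=\begin{cases}\frac{P_{j-1}^i}{3}, & j=3s-1,\\ \frac{P_{j-1}^i}{3}+x_{j/3}^3, & j=3s,\\ \frac{P_{j-1}^i-x_{(j-1)/3}^3}{3}, & j=3s+1.\end{cases}$$ *)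

theory Defs
  imports "HOL-Number_Theory.Cong"
begin

text \<open>3-adic numbers are represented by their digit sequences (functions nat \<Rightarrow> int
  with values in {0,1,2}).  For a with gamma(a) = 1 the number is
  a = 3 * (a_0 + a_1 3 + a_2 3^2 + ...); for b with gamma(b) = 0 it is
  b = b_0 + b_1 3 + ...; x in Z_3^* is x = x_0 + x_1 3 + ...\<close>

definition digits3 :: "(nat \<Rightarrow> int) \<Rightarrow> bool" where
  "digits3 d \<longleftrightarrow> (\<forall>t. d t \<in> {0, 1, 2})"

definition trunc3 :: "(nat \<Rightarrow> int) \<Rightarrow> nat \<Rightarrow> int" where
  "trunc3 d N = (\<Sum>t<N. d t * 3 ^ t)"

text \<open>x is a solution of x^3 + a x = b in Z_3, where a = 3 * (sum a_j 3^j) and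
  b = sum b_j 3^j: equality in Z_3 means congruence modulo 3^N for every N.\<close>
definition is_solution :: "(nat \<Rightarrow> int) \<Rightarrow> (nat \<Rightarrow> int) \<Rightarrow> (nat \<Rightarrow> int) \<Rightarrow> bool" where
  "is_solution x a b \<longleftrightarrow>
     (\<forall>N. [trunc3 x N ^ 3 + (3 * trunc3 a N) * trunc3 x N = trunc3 b N] (mod 3 ^ N))"

definition Rk :: "(nat \<Rightarrow> int) \<Rightarrow> nat \<Rightarrow> int" where
  "Rk x k = (\<Sum>j\<le>k. x j * x (k - j))"

text \<open>A_0 = x_0^2 + a_0, A_k = A_{k-1}/3 + a_k + R_k (division is exact under the
  standing hypothesis that all A_k are divisible by 3).\<close>
primrec Aseq :: "(nat \<Rightarrow> int) \<Rightarrow> (nat \<Rightarrow> int) \<Rightarrow> nat \<Rightarrow> int" where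
  "Aseq x a 0 = x 0 ^ 2 + a 0"
| "Aseq x a (Suc k) = Aseq x a k div 3 + a (Suc k) + Rk x (Suc k)"

text \<open>P_k^j(x_0,...,x_{j-1}); the multinomial coefficient 6/(m_0!...m_{j-1}!) is an integer.\<close>
definition Pkj :: "(nat \<Rightarrow> int) \<Rightarrow> nat \<Rightarrow> nat \<Rightarrow> int" where
  "Pkj x k j = (\<Sum>m \<in> {m :: nat \<Rightarrow> nat. (\<forall>i. j \<le> i \<longrightarrow> m i = 0) \<and>
                     (\<Sum>i<j. m i) = 3 \<and> (\<Sum>i<j. i * m i) = k}.
                 (6 div (\<Prod>i<j. fact (m i))) * (\<Prod>i<j. x i ^ m i))"

text \<open>S_j^i, by the residue of j modulo 3 (j = 3s-1, 3s, 3s+1).  The divisions are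
  exact in all instances used in the theorem.\<close>
definition Sji :: "(nat \<Rightarrow> int) \<Rightarrow> nat \<Rightarrow> nat \<Rightarrow> int" where
  "Sji x j i =
     (if j mod 3 = 2 then Pkj x (j - 1) i div 3
      else if j mod 3 = 0 then Pkj x (j - 1) i div 3 + x (j div 3) ^ 3
      else (Pkj x (j - 1) i - x ((j - 1) div 3) ^ 3) div 3)"

text \<open>Left-hand sides of the congruences of index 2j and 2j+1, given the carry m.\<close>
definition Leven :: "(nat \<Rightarrow> int) \<Rightarrow> (nat \<Rightarrow> int) \<Rightarrow> nat \<Rightarrow> int \<Rightarrow> int" where
  "Leven x a j m = (\<Sum>t<j. x (j - 1 - t) * a (j + t)) + Sji x (2 * j) j + m"

definition Lodd :: "(nat \<Rightarrow> int) \<Rightarrow> (nat \<Rightarrow> int) \<Rightarrow> nat \<Rightarrow> int \<Rightarrow> int" where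
  "Lodd x a j m = (Aseq x a j - x 0 * x j) * x j
                  + (\<Sum>t<j. x (j - 1 - t) * a (j + 1 + t)) + Sji x (2 * j + 1) j + m"

text \<open>Mpair j = (M_{2j+1}, M_{2j+2}).  Each M is defined by 3 M = (previous lhs) - b;
  the division is exact whenever the preceding congruences hold.\<close>
primrec Mpair :: "(nat \<Rightarrow> int) \<Rightarrow> (nat \<Rightarrow> int) \<Rightarrow> (nat \<Rightarrow> int) \<Rightarrow> nat \<Rightarrow> int \<times> int" where
  "Mpair x a b 0 =
     (let m1 = (x 0 ^ 3 - b 0) div 3 in (m1, (x 0 * a 0 + m1 - b 1) div 3))"
| "Mpair x a b (Suc n) =
     (let j = Suc n;
          m1 = (Leven x a j (snd (Mpair x a b n)) - b (2 * j)) div 3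
      in (m1, (Lodd x a j m1 - b (2 * j + 1)) div 3))"

definition Mk :: "(nat \<Rightarrow> int) \<Rightarrow> (nat \<Rightarrow> int) \<Rightarrow> (nat \<Rightarrow> int) \<Rightarrow> nat \<Rightarrow> int" where
  "Mk x a b k = (if k = 0 then 0
                 else if odd k then fst (Mpair x a b (k div 2))
                 else snd (Mpair x a b (k div 2 - 1)))"

end

theory Submission
  imports Defs "HOL-Computational_Algebra.Polynomial"
begin

text \<open>Let \<open>X\<close> be the truncation of \<open>x\<close> to its first \<open>J + 1\<close> digits and \<open>\<alpha>\<close> that of
  \<open>a/3\<close> to \<open>2J + 1\<close> digits.  Since every \<open>A\<^sub>k\<close> is divisible by 3, the recursion for \<open>A\<close>
  telescopes to \<open>3\<^sup>k A\<^sub>k = \<Sum>\<^sub>i\<^sub>\<le>\<^sub>k 3\<^sup>i (R\<^sub>i + a\<^sub>i)\<close>, so the hypothesis says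
  \<open>x\<^sup>2 + a/3 = 0\<close> in \<open>\<int>\<^sub>3\<close>.  In particular \<open>X\<^sup>2 + \<alpha> \<equiv> 0 (mod 3\<^sup>J\<^sup>+\<^sup>1)\<close>,
  which makes \<open>x\<^sup>3 + a x \<equiv> X\<^sup>3 + 3\<alpha>X (mod 3\<^sup>2\<^sup>J\<^sup>+\<^sup>2)\<close>.  Expanding \<open>X\<^sup>3\<close> by the
  multinomial theorem, with the coefficients of the cube reduced modulo 3 by \<open>p\<^sup>3 \<equiv> p(X\<^sup>3)\<close>,
  one finds that the left-hand sides \<open>L\<^sub>k\<close> of the system (without carries) satisfy
  \<open>\<Sum>\<^sub>k\<^sub><\<^sub>2\<^sub>J\<^sub>+\<^sub>2 L\<^sub>k 3\<^sup>k \<equiv> X\<^sup>3 + 3\<alpha>X (mod 3\<^sup>2\<^sup>J\<^sup>+\<^sup>2)\<close>.  Hence \<open>x\<close> is a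
  solution iff \<open>\<Sum>\<^sub>k (L\<^sub>k - b\<^sub>k) 3\<^sup>k = 0\<close> in \<open>\<int>\<^sub>3\<close>, and the congruences with the carries
  \<open>M\<^sub>k\<close> are exactly the digitwise form of this.\<close>

definition digit_poly :: "(nat \<Rightarrow> int) \<Rightarrow> nat \<Rightarrow> int poly" where
  "digit_poly x j = (\<Sum>i<j. monom (x i) i)"

lemma coeff_digit_poly: "coeff (digit_poly x j) i = (if i < j then x i else 0)"
  unfolding digit_poly_def by (simp add: coeff_sum)

lemma digit_poly_Suc: "digit_poly x (Suc j) = digit_poly x j + monom (x j) j"
  unfolding digit_poly_def by simp

lemma poly_digit_poly_3: "poly (digit_poly x j) 3 = trunc3 x j"
  unfolding digit_poly_def trunc3_def by (simp add: poly_sum poly_monom)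

lemma degree_digit_poly: "degree (digit_poly x (Suc j)) \<le> j"
  by (rule degree_le) (auto simp: coeff_digit_poly)

lemma poly_eq_sum_coeff_lessThan:
  fixes q :: "'a::comm_semiring_1 poly"
  assumes "degree q < N"
  shows "poly q z = (\<Sum>n<N. coeff q n * z ^ n)"
  unfolding poly_altdef using assms
  by (intro sum.mono_neutral_left) (auto simp: coeff_eq_0)

section \<open>The multinomial theorem for digit polynomials\<close>

definition exponent_vectors :: "nat \<Rightarrow> nat \<Rightarrow> nat \<Rightarrow> (nat \<Rightarrow> nat) set" where
  "exponent_vectors n k j =
     {m. (\<forall>i. j \<le> i \<longrightarrow> m i = 0) \<and> (\<Sum>i<j. m i) = n \<and> (\<Sum>i<j. i * m i) = k}"

definition multinomial_sum :: "(nat \<Rightarrow> int) \<Rightarrow> nat \<Rightarrow> nat \<Rightarrow> nat \<Rightarrow> int" where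
  "multinomial_sum x n k j =
     (\<Sum>m\<in>exponent_vectors n k j. (fact n div (\<Prod>i<j. fact (m i))) * (\<Prod>i<j. x i ^ m i))"

lemma finite_exponent_vectors: "finite (exponent_vectors n k j)"
proof (rule finite_subset)
  show "exponent_vectors n k j \<subseteq> {m. \<forall>i. (i \<in> {..<j} \<longrightarrow> m i \<in> {..n}) \<and> (i \<notin> {..<j} \<longrightarrow> m i = 0)}"
    by (auto simp: exponent_vectors_def intro: order_trans[OF member_le_sum])
qed (intro finite_set_of_finite_funs; simp)

lemma exponent_vectors_0: "exponent_vectors n k 0 = (if n = 0 \<and> k = 0 then {\<lambda>_. 0} else {})"
  by (auto simp: exponent_vectors_def)

lemma fact_times_fact_dvd_fact: "c \<le> n \<Longrightarrow> (fact c * fact (n - c) :: int) dvd fact n"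
  by (metis binomial_fact_lemma dvd_triv_left of_nat_fact of_nat_mult)

lemma prod_fact_dvd_fact:
  fixes m :: "nat \<Rightarrow> nat"
  assumes "\<forall>i. j \<le> i \<longrightarrow> m i = 0" "(\<Sum>i<j. m i) = n"
  shows "(\<Prod>i<j. fact (m i) :: int) dvd fact n"
  using assms
proof (induction j arbitrary: m n)
  case (Suc j)
  have "(\<Prod>i<j. fact ((m(j := 0)) i) :: int) dvd fact (n - m j)"
    using Suc.prems by (intro Suc.IH) auto
  then have "(\<Prod>i<Suc j. fact (m i) :: int) dvd fact (m j) * fact (n - m j)"
    by (simp add: mult.commute mult_dvd_mono)
  also have "\<dots> dvd fact n"
    using Suc.prems(2) by (intro fact_times_fact_dvd_fact) simp
  finally show ?case .
qed simp

lemma multinomial_term_split: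
  assumes "c \<le> n" and m: "m \<in> exponent_vectors (n - c) k j"
  shows "(fact n div (\<Prod>i<Suc j. fact ((m(j := c)) i))) * (\<Prod>i<Suc j. x i ^ (m(j := c)) i)
     = of_nat (n choose c) * x j ^ c * ((fact (n - c) div (\<Prod>i<j. fact (m i))) * (\<Prod>i<j. x i ^ m i) :: int)"
proof -
  let ?P = "\<Prod>i<j. fact (m i) :: int"
  have "?P dvd fact (n - c)"
    using m by (intro prod_fact_dvd_fact) (auto simp: exponent_vectors_def)
  then obtain Q where Q: "fact (n - c) = ?P * Q" ..
  have "fact c * fact (n - c) * (n choose c) = (fact n :: nat)"
    using binomial_fact_lemma[OF \<open>c \<le> n\<close>] .
  then have F: "(fact n :: int) = fact c * fact (n - c) * of_nat (n choose c)"
    by (metis of_nat_fact of_nat_mult)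
  have "?P \<noteq> 0" by (simp add: prod_zero_iff)
  then have "(fact n :: int) div (?P * fact c) = of_nat (n choose c) * Q" "fact (n - c) div ?P = Q"
    unfolding F Q by (simp_all add: ac_simps)
  moreover have "(\<Prod>i<j. fact ((m(j := c)) i) :: int) = ?P"
    "(\<Prod>i<j. x i ^ (m(j := c)) i) = (\<Prod>i<j. x i ^ m i)"
    by (auto intro: prod.cong)
  ultimately show ?thesis by (simp add: ac_simps)
qed

lemma sum_exponent_vectors_Suc:
  "(\<Sum>m\<in>exponent_vectors n k (Suc j). f m) =
   (\<Sum>c | c \<le> n \<and> j * c \<le> k. \<Sum>m\<in>exponent_vectors (n - c) (k - j * c) j. f (m(j := c)))"
proof -
  define S where "S = Sigma {c. c \<le> n \<and> j * c \<le> k} (\<lambda>c. exponent_vectors (n - c) (k - j * c) j)"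
  have "(\<Sum>m\<in>exponent_vectors n k (Suc j). f m) = (\<Sum>p\<in>S. f ((snd p)(j := fst p)))"
  proof (rule sum.reindex_bij_witness[of _ "\<lambda>p. (snd p)(j := fst p)" "\<lambda>m. (m j, m(j := 0))"])
    fix p assume "p \<in> S"
    then obtain c m where p: "p = (c, m)" and c: "c \<le> n" "j * c \<le> k"
      and m: "m \<in> exponent_vectors (n - c) (k - j * c) j"
      by (auto simp: S_def)
    moreover have "(\<Sum>i<j. (m(j := c)) i) = (\<Sum>i<j. m i)" "(\<Sum>i<j. i * (m(j := c)) i) = (\<Sum>i<j. i * m i)"
      by (auto intro: sum.cong)
    ultimately show "(((snd p)(j := fst p)) j, ((snd p)(j := fst p))(j := 0)) = p"
      "(snd p)(j := fst p) \<in> exponent_vectors n k (Suc j)"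
      by (auto simp: exponent_vectors_def fun_eq_iff)
  next
    fix m assume "m \<in> exponent_vectors n k (Suc j)"
    moreover have "(\<Sum>i<j. (m(j := 0)) i) = (\<Sum>i<j. m i)" "(\<Sum>i<j. i * (m(j := 0)) i) = (\<Sum>i<j. i * m i)"
      by (auto intro: sum.cong)
    ultimately show "(m j, m(j := 0)) \<in> S"
      by (auto simp: S_def exponent_vectors_def)
  qed auto
  also have "\<dots> = (\<Sum>c | c \<le> n \<and> j * c \<le> k. \<Sum>m\<in>exponent_vectors (n - c) (k - j * c) j. f (m(j := c)))"
    unfolding S_def by (subst sum.Sigma) (auto simp: finite_exponent_vectors split_def)
  finally show ?thesis .
qed

lemma coeff_monom_power_mult:
  fixes v :: int and p :: "int poly"
  shows "coeff (of_nat C * monom v d ^ c * p) k =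
         (if k < d * c then 0 else of_nat C * v ^ c * coeff p (k - d * c))"
proof -
  have "(of_nat C :: int poly) * monom v d ^ c = monom (of_nat C * v ^ c) (d * c)"
    by (simp add: of_nat_poly smult_monom monom_power)
  then show ?thesis by (simp add: coeff_monom_mult)
qed

lemma multinomial_sum_eq_coeff_power: "multinomial_sum x n k j = coeff (digit_poly x j ^ n) k"
proof (induction j arbitrary: n k)
  case 0
  show ?case by (simp add: multinomial_sum_def exponent_vectors_0 digit_poly_def power_0_left)
next
  case (Suc j)
  have "multinomial_sum x n k (Suc j) =
        (\<Sum>c | c \<le> n \<and> j * c \<le> k. of_nat (n choose c) * x j ^ c * multinomial_sum x (n - c) (k - j * c) j)"
    unfolding multinomial_sum_def sum_exponent_vectors_Suc sum_distrib_left
    by (intro sum.cong refl multinomial_term_split) auto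
  also have "\<dots> = (\<Sum>c\<le>n. coeff (of_nat (n choose c) * monom (x j) j ^ c * digit_poly x j ^ (n - c)) k)"
    unfolding Suc.IH coeff_monom_power_mult
    by (subst Collect_conj_eq, subst sum.If_cases) (auto simp: not_less Int_def intro!: sum.cong)
  also have "\<dots> = coeff (digit_poly x (Suc j) ^ n) k"
    unfolding digit_poly_Suc by (simp add: add.commute[of "digit_poly x j"] binomial_ring coeff_sum)
  finally show ?case .
qed

lemma Pkj_eq_coeff_cube: "Pkj x k j = coeff (digit_poly x j ^ 3) k"
  unfolding multinomial_sum_eq_coeff_power[symmetric] Pkj_def multinomial_sum_def exponent_vectors_def
  by (simp add: fact_numeral)

section \<open>Cubes modulo 3\<close>

lemma cube_pCons:
  fixes c :: int
  shows "(pCons c q) ^ 3 = [:c ^ 3:] + smult 3 (pCons 0 ([:c ^ 2:] * q + pCons 0 ([:c:] * q ^ 2)))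
                         + pCons 0 (pCons 0 (pCons 0 (q ^ 3)))"
proof -
  have "poly ((pCons c q) ^ 3) = poly ([:c ^ 3:] + smult 3 (pCons 0 ([:c ^ 2:] * q + pCons 0 ([:c:] * q ^ 2)))
                         + pCons 0 (pCons 0 (pCons 0 (q ^ 3))))"
    by (rule ext) (simp add: algebra_simps power3_eq_cube power2_eq_square)
  then show ?thesis by (simp add: poly_eq_poly_eq_iff)
qed

lemma coeff_cube_cong:
  fixes p :: "int poly"
  shows "[coeff (p ^ 3) k = (if 3 dvd k then coeff p (k div 3) ^ 3 else 0)] (mod 3)"
proof (induction p arbitrary: k)
  case (pCons c q)
  have low: "[coeff ((pCons c q) ^ 3) k = coeff [:c ^ 3:] k + coeff (pCons 0 (pCons 0 (pCons 0 (q ^ 3)))) k] (mod 3)"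
    unfolding cube_pCons coeff_add coeff_smult by (simp add: cong_iff_dvd_diff)
  have "k < 3 \<or> (\<exists>k'. k = k' + 3)" by presburger
  then show ?case
  proof
    assume "k < 3"
    then consider "k = 0" | "k = 1" | "k = 2" by linarith
    then show ?thesis using low by cases (simp_all add: coeff_pCons split: nat.split)
  next
    assume "\<exists>k'. k = k' + 3"
    then obtain k' where k: "k = k' + 3" ..
    have "[coeff ((pCons c q) ^ 3) k = coeff (q ^ 3) k'] (mod 3)"
      using low by (simp add: k numeral_3_eq_3)
    also have "[coeff (q ^ 3) k' = (if 3 dvd k' then coeff q (k' div 3) ^ 3 else 0)] (mod 3)"
      by (rule pCons.IH)
    also have "(if 3 dvd k' then coeff q (k' div 3) ^ 3 else 0) =
               (if 3 dvd k then coeff (pCons c q) (k div 3) ^ 3 else 0)"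
      by (simp add: k)
    finally show ?thesis .
  qed
qed (simp add: power3_eq_cube)

definition cube_residue :: "(nat \<Rightarrow> int) \<Rightarrow> nat \<Rightarrow> int" where
  "cube_residue x k = (if 3 dvd k then x (k div 3) ^ 3 else 0)"

lemma Pkj_cong_cube_residue: "k < 3 * j \<Longrightarrow> 3 dvd Pkj x k j - cube_residue x k"
  using coeff_cube_cong[of "digit_poly x j" k]
  by (auto simp: Pkj_eq_coeff_cube cube_residue_def coeff_digit_poly cong_iff_dvd_diff)

lemma Sji_eq:
  assumes "1 \<le> n"
  shows "Sji x n i = (Pkj x (n - 1) i - cube_residue x (n - 1)) div 3 + cube_residue x n"
proof -
  consider "n mod 3 = 0" | "n mod 3 = 1" | "n mod 3 = 2" by linarith
  then show ?thesis
  proof cases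
    case 1
    then have "\<not> 3 dvd (n - 1)" "3 dvd n" using assms by presburger+
    with 1 show ?thesis by (simp add: Sji_def cube_residue_def)
  next
    case 2
    then have "3 dvd (n - 1)" "\<not> 3 dvd n" using assms by presburger+
    with 2 show ?thesis by (simp add: Sji_def cube_residue_def)
  next
    case 3
    then have "\<not> 3 dvd (n - 1)" "\<not> 3 dvd n" using assms by presburger+
    with 3 show ?thesis by (simp add: Sji_def cube_residue_def)
  qed
qed

lemma Sji_scaled:
  assumes "1 \<le> n" "n - 1 < 3 * i"
  shows "3 ^ n * Sji x n i = 3 ^ (n - 1) * (Pkj x (n - 1) i - cube_residue x (n - 1)) + 3 ^ n * cube_residue x n"
proof -
  obtain q where q: "Pkj x (n - 1) i - cube_residue x (n - 1) = 3 * q"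
    using Pkj_cong_cube_residue[OF assms(2)] by blast
  have "(3::int) ^ n = 3 ^ (n - 1) * 3" using assms(1) by (cases n) auto
  then show ?thesis unfolding Sji_eq[OF assms(1)] q by (simp add: algebra_simps)
qed

section \<open>Truncations and the hypothesis on \<open>A\<close>\<close>

lemma sum_lessThan_power_cong:
  fixes f :: "nat \<Rightarrow> int"
  assumes "m \<le> N"
  shows "[(\<Sum>n<N. f n * q ^ n) = (\<Sum>n<m. f n * q ^ n)] (mod q ^ m)"
proof -
  have "(\<Sum>n<N. f n * q ^ n) = (\<Sum>n<m. f n * q ^ n) + (\<Sum>n\<in>{m..<N}. f n * q ^ n)"
    using assms by (simp add: lessThan_atLeast0 sum.atLeastLessThan_concat)
  moreover have "q ^ m dvd (\<Sum>n\<in>{m..<N}. f n * q ^ n)"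
    by (intro dvd_sum) (simp add: le_imp_power_dvd)
  ultimately show ?thesis by (simp add: cong_iff_dvd_diff)
qed

lemma trunc3_cong: "m \<le> N \<Longrightarrow> [trunc3 d N = trunc3 d m] (mod 3 ^ m)"
  unfolding trunc3_def by (rule sum_lessThan_power_cong)

lemma trunc3_Suc: "trunc3 d (Suc n) = trunc3 d n + 3 ^ n * d n"
  unfolding trunc3_def by (simp add: algebra_simps)

lemma Aseq_scaled:
  assumes "\<forall>k. [Aseq x a k = 0] (mod 3)"
  shows "3 ^ k * Aseq x a k = (\<Sum>i\<le>k. 3 ^ i * (Rk x i + a i))"
proof (induction k)
  case (Suc k)
  have "3 * (Aseq x a k div 3) = Aseq x a k"
    using assms by (simp add: cong_0_iff)
  then have "3 ^ Suc k * Aseq x a (Suc k) = 3 ^ k * Aseq x a k + 3 ^ Suc k * (a (Suc k) + Rk x (Suc k))"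
    by (simp add: algebra_simps)
  then show ?case unfolding Suc.IH by (simp add: algebra_simps)
qed (simp add: Rk_def power2_eq_square)

lemma Rk_eq_coeff_square: "k < j \<Longrightarrow> Rk x k = coeff (digit_poly x j ^ 2) k"
  unfolding Rk_def power2_eq_square coeff_mult coeff_digit_poly
  by (intro sum.cong) auto

lemma square_plus_trunc3_dvd:
  assumes "\<forall>k. [Aseq x a k = 0] (mod 3)" and "Suc J \<le> N"
  shows "3 ^ Suc J dvd trunc3 x (Suc J) ^ 2 + trunc3 a N"
proof -
  define q where "q = digit_poly x (Suc J) ^ 2"
  have "degree q < 2 * J + 2"
    using degree_power_le[of "digit_poly x (Suc J)" 2] degree_digit_poly[of x J]
    unfolding q_def by linarith
  then have "trunc3 x (Suc J) ^ 2 = (\<Sum>n<2 * J + 2. coeff q n * 3 ^ n)"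
    unfolding q_def poly_digit_poly_3[symmetric] poly_power[symmetric]
    by (rule poly_eq_sum_coeff_lessThan)
  also have "[\<dots> = (\<Sum>n<Suc J. coeff q n * 3 ^ n)] (mod 3 ^ Suc J)"
    by (rule sum_lessThan_power_cong) simp
  also have "(\<Sum>n<Suc J. coeff q n * 3 ^ n) = (\<Sum>k\<le>J. 3 ^ k * Rk x k)"
    unfolding lessThan_Suc_atMost q_def by (intro sum.cong) (simp_all add: Rk_eq_coeff_square[of _ "Suc J"])
  finally have "[trunc3 x (Suc J) ^ 2 + trunc3 a N = (\<Sum>k\<le>J. 3 ^ k * Rk x k) + trunc3 a (Suc J)] (mod 3 ^ Suc J)"
    using trunc3_cong[OF assms(2)] by (rule cong_add)
  also have "(\<Sum>k\<le>J. 3 ^ k * Rk x k) + trunc3 a (Suc J) = 3 ^ J * Aseq x a J"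
    unfolding Aseq_scaled[OF assms(1)] trunc3_def lessThan_Suc_atMost
    by (simp add: sum.distrib algebra_simps)
  also have "[3 ^ J * Aseq x a J = 0] (mod 3 ^ Suc J)"
    using assms(1) by (simp add: cong_0_iff)
  finally show ?thesis by (simp add: cong_0_iff)
qed

section \<open>The left-hand sides as a 3-adic expansion\<close>

text \<open>The parts of \<open>X\<^sup>3\<close> and \<open>3\<alpha>X\<close> below \<open>3\<^sup>2\<^sup>J\<^sup>+\<^sup>1\<close> and \<open>3\<^sup>2\<^sup>J\<^sup>+\<^sup>2\<close>, computed termwise
  without carrying.\<close>

definition cube_head :: "(nat \<Rightarrow> int) \<Rightarrow> nat \<Rightarrow> int" where
  "cube_head x J = (\<Sum>n\<le>2 * J. 3 ^ n * coeff (digit_poly x (Suc J) ^ 3) n)"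

definition linear_head :: "(nat \<Rightarrow> int) \<Rightarrow> (nat \<Rightarrow> int) \<Rightarrow> nat \<Rightarrow> int" where
  "linear_head x a J = (\<Sum>l\<le>J. \<Sum>i\<le>2 * J - l. a i * x l * 3 ^ (i + l + 1))"

lemma sum_atMost_coeff_monom_mult:
  fixes q :: "'a::comm_semiring_1 poly"
  assumes "d \<le> N"
  shows "(\<Sum>n\<le>N. z ^ n * coeff (monom c d * q) n) = c * z ^ d * (\<Sum>m\<le>N - d. z ^ m * coeff q m)"
proof -
  have "(\<Sum>n\<le>N. z ^ n * coeff (monom c d * q) n) = (\<Sum>n\<in>{d..N}. z ^ n * coeff (monom c d * q) n)"
    by (intro sum.mono_neutral_right) (auto simp: coeff_monom_mult)
  also have "\<dots> = (\<Sum>m\<le>N - d. z ^ (d + m) * coeff (monom c d * q) (d + m))"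
    using assms by (simp add: sum.atLeastAtMost_shift_0 atLeast0AtMost)
  also have "\<dots> = c * z ^ d * (\<Sum>m\<le>N - d. z ^ m * coeff q m)"
    unfolding coeff_monom_mult by (simp add: sum_distrib_left power_add algebra_simps)
  finally show ?thesis .
qed

lemma cube_add_monom:
  fixes p :: "int poly"
  shows "(p + monom c d) ^ 3 = p ^ 3 + monom c d * smult 3 (p ^ 2) + monom (c ^ 2) (2 * d) * smult 3 p
                               + monom (c ^ 3) (3 * d)"
proof -
  have "poly ((p + monom c d) ^ 3) = poly (p ^ 3 + monom c d * smult 3 (p ^ 2)
          + monom (c ^ 2) (2 * d) * smult 3 p + monom (c ^ 3) (3 * d))"
    by (rule ext) (simp add: poly_monom algebra_simps power3_eq_cube power2_eq_square power_mult)
  then show ?thesis by (simp add: poly_eq_poly_eq_iff)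
qed

lemma cube_head_Suc:
  "cube_head x (Suc J) = cube_head x J + 3 ^ (2 * J + 1) * Pkj x (2 * J + 1) (Suc J)
     + 3 ^ (2 * J + 2) * Pkj x (2 * J + 2) (Suc J)
     + 3 ^ (J + 2) * x (Suc J) * (\<Sum>m\<le>Suc J. 3 ^ m * coeff (digit_poly x (Suc J) ^ 2) m)
     + 3 ^ (2 * J + 3) * x (Suc J) ^ 2 * x 0"
proof -
  define j where "j = Suc J"
  define p where "p = digit_poly x j"
  let ?S = "\<lambda>q. \<Sum>n\<le>2 * j. 3 ^ n * coeff q n"
  have "cube_head x (Suc J) = ?S (p ^ 3) + ?S (monom (x j) j * smult 3 (p ^ 2))
      + ?S (monom (x j ^ 2) (2 * j) * smult 3 p) + ?S (monom (x j ^ 3) (3 * j))"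
    unfolding cube_head_def j_def[symmetric] digit_poly_Suc p_def[symmetric] cube_add_monom
    by (simp add: sum.distrib algebra_simps)
  also have "?S (p ^ 3) = cube_head x J + 3 ^ (2 * J + 1) * Pkj x (2 * J + 1) (Suc J)
      + 3 ^ (2 * J + 2) * Pkj x (2 * J + 2) (Suc J)"
    by (simp add: cube_head_def Pkj_eq_coeff_cube p_def j_def)
  also have "?S (monom (x j) j * smult 3 (p ^ 2)) =
      3 ^ (J + 2) * x (Suc J) * (\<Sum>m\<le>Suc J. 3 ^ m * coeff (digit_poly x (Suc J) ^ 2) m)"
    by (subst sum_atMost_coeff_monom_mult) (simp_all add: sum_distrib_left algebra_simps p_def j_def)
  also have "?S (monom (x j ^ 2) (2 * j) * smult 3 p) = 3 ^ (2 * J + 3) * x (Suc J) ^ 2 * x 0"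
    by (subst sum_atMost_coeff_monom_mult) (simp_all add: p_def coeff_digit_poly j_def power_add)
  also have "?S (monom (x j ^ 3) (3 * j)) = 0"
    by (intro sum.neutral) (auto simp: coeff_monom j_def)
  finally show ?thesis by simp
qed

lemma square_add_monom:
  fixes p :: "int poly"
  shows "(p + monom c d) ^ 2 = p ^ 2 + monom c d * smult 2 p + monom (c ^ 2) (2 * d)"
proof -
  have "poly ((p + monom c d) ^ 2) = poly (p ^ 2 + monom c d * smult 2 p + monom (c ^ 2) (2 * d))"
    by (rule ext) (simp add: poly_monom algebra_simps power2_eq_square power_mult)
  then show ?thesis by (simp add: poly_eq_poly_eq_iff)
qed

text \<open>The term \<open>(A\<^sub>j - x\<^sub>0x\<^sub>j)x\<^sub>j\<close> of the odd congruences collects the cross terms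
  \<open>3x\<^sub>jX\<^sup>2\<close> and \<open>3x\<^sub>j\<^sup>2X\<close> of the cube with the new digit \<open>x\<^sub>j\<close> and its part of \<open>3\<alpha>X\<close>.\<close>

lemma Aseq_cross_term:
  assumes "\<forall>k. [Aseq x a k = 0] (mod 3)"
  shows "3 ^ (2 * J + 3) * ((Aseq x a (Suc J) - x 0 * x (Suc J)) * x (Suc J))
     = 3 ^ (J + 2) * x (Suc J) * (\<Sum>m\<le>Suc J. 3 ^ m * coeff (digit_poly x (Suc J) ^ 2) m)
       + 3 ^ (2 * J + 3) * x (Suc J) ^ 2 * x 0
       + (\<Sum>i\<le>Suc J. a i * x (Suc J) * 3 ^ (i + Suc J + 1))"
proof -
  define j where "j = Suc J"
  define p where "p = digit_poly x j"
  let ?S = "\<lambda>q. \<Sum>k\<le>j. 3 ^ k * coeff q k"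
  have "(\<Sum>k\<le>j. 3 ^ k * Rk x k) = ?S ((p + monom (x j) j) ^ 2)"
    unfolding p_def digit_poly_Suc[symmetric] by (intro sum.cong) (simp_all add: Rk_eq_coeff_square)
  also have "\<dots> = ?S (p ^ 2) + ?S (monom (x j) j * smult 2 p) + ?S (monom (x j ^ 2) (2 * j))"
    unfolding square_add_monom by (simp add: sum.distrib algebra_simps)
  also have "?S (monom (x j) j * smult 2 p) = 2 * 3 ^ j * x j * x 0"
    by (subst sum_atMost_coeff_monom_mult) (simp_all add: p_def coeff_digit_poly j_def)
  also have "?S (monom (x j ^ 2) (2 * j)) = 0"
    by (intro sum.neutral) (auto simp: coeff_monom j_def)
  finally have A: "3 ^ j * Aseq x a j = ?S (p ^ 2) + 2 * 3 ^ j * x j * x 0 + (\<Sum>k\<le>j. 3 ^ k * a k)"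
    unfolding Aseq_scaled[OF assms] by (simp add: sum.distrib algebra_simps)
  have "2 * J + 3 = (j + 1) + j" "J + 2 = j + 1" by (simp_all add: j_def)
  then have e: "(3::int) ^ (2 * J + 3) = 3 ^ (j + 1) * 3 ^ j" "(3::int) ^ (J + 2) = 3 ^ (j + 1)"
    by (simp_all only: power_add)
  have "3 ^ (2 * J + 3) * ((Aseq x a j - x 0 * x j) * x j) =
      3 ^ (J + 2) * x j * ?S (p ^ 2) + 3 ^ (2 * J + 3) * x j ^ 2 * x 0 + (\<Sum>i\<le>j. a i * x j * 3 ^ (i + j + 1))"
    unfolding e using A by (simp add: algebra_simps power2_eq_square sum_distrib_left power_add)
  then show ?thesis by (simp add: p_def j_def)
qed

lemma sum_antidiagonal_reflect:
  fixes a x :: "nat \<Rightarrow> int"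
  assumes "J \<le> s"
  shows "(\<Sum>l\<le>J. a (s - l) * x l * 3 ^ (s - l + l + 1)) = 3 ^ (s + 1) * (\<Sum>t<Suc J. x (J - t) * a (s - J + t))"
proof -
  have "(\<Sum>l\<le>J. a (s - l) * x l * 3 ^ (s - l + l + 1)) = (\<Sum>l<Suc J. 3 ^ (s + 1) * (x l * a (s - l)))"
    using assms by (intro sum.cong) (auto simp: lessThan_Suc_atMost)
  also have "\<dots> = (\<Sum>t<Suc J. 3 ^ (s + 1) * (x (J - t) * a (s - (J - t))))"
    by (subst sum.nat_diff_reindex[symmetric]) simp
  also have "\<dots> = 3 ^ (s + 1) * (\<Sum>t<Suc J. x (J - t) * a (s - J + t))"
    unfolding sum_distrib_left using assms by (intro sum.cong) auto
  finally show ?thesis .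
qed

lemma linear_head_Suc:
  "linear_head x a (Suc J) = linear_head x a J + (\<Sum>i\<le>Suc J. a i * x (Suc J) * 3 ^ (i + Suc J + 1))
     + 3 ^ (2 * J + 2) * (\<Sum>t<Suc J. x (Suc J - 1 - t) * a (Suc J + t))
     + 3 ^ (2 * J + 3) * (\<Sum>t<Suc J. x (Suc J - 1 - t) * a (Suc J + 1 + t))"
proof -
  define f where "f i l = a i * x l * 3 ^ (i + l + 1)" for i l
  have "linear_head x a (Suc J) = (\<Sum>l\<le>J. \<Sum>i\<le>Suc (Suc (2 * J - l)). f i l) + (\<Sum>i\<le>Suc J. f i (Suc J))"
    unfolding linear_head_def f_def by (simp add: Suc_diff_le)
  also have "\<dots> = linear_head x a J + (\<Sum>l\<le>J. f (2 * J + 1 - l) l) + (\<Sum>l\<le>J. f (2 * J + 2 - l) l)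
      + (\<Sum>i\<le>Suc J. f i (Suc J))"
    unfolding linear_head_def f_def by (simp add: sum.distrib Suc_diff_le)
  also have "(\<Sum>l\<le>J. f (2 * J + 1 - l) l) = 3 ^ (2 * J + 2) * (\<Sum>t<Suc J. x (Suc J - 1 - t) * a (Suc J + t))"
    unfolding f_def by (subst sum_antidiagonal_reflect) simp_all
  also have "(\<Sum>l\<le>J. f (2 * J + 2 - l) l) = 3 ^ (2 * J + 3) * (\<Sum>t<Suc J. x (Suc J - 1 - t) * a (Suc J + 1 + t))"
    unfolding f_def by (subst sum_antidiagonal_reflect) (simp_all add: power_add)
  finally show ?thesis by (simp add: f_def)
qed

definition lhs_digit :: "(nat \<Rightarrow> int) \<Rightarrow> (nat \<Rightarrow> int) \<Rightarrow> nat \<Rightarrow> int" where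
  "lhs_digit x a k = (if k = 0 then x 0 ^ 3 else if k = 1 then x 0 * a 0
      else if even k then Leven x a (k div 2) 0 else Lodd x a (k div 2) 0)"

definition lhs_value :: "(nat \<Rightarrow> int) \<Rightarrow> (nat \<Rightarrow> int) \<Rightarrow> nat \<Rightarrow> int" where
  "lhs_value x a N = (\<Sum>k<N. lhs_digit x a k * 3 ^ k)"

lemma lhs_digit_even:
  "lhs_digit x a (2 * J + 2) = (\<Sum>t<Suc J. x (Suc J - 1 - t) * a (Suc J + t)) + Sji x (2 * Suc J) (Suc J)"
  by (simp add: lhs_digit_def Leven_def)

lemma lhs_digit_odd:
  "lhs_digit x a (2 * J + 3) = (Aseq x a (Suc J) - x 0 * x (Suc J)) * x (Suc J)
     + (\<Sum>t<Suc J. x (Suc J - 1 - t) * a (Suc J + 1 + t)) + Sji x (2 * Suc J + 1) (Suc J)"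
proof -
  have "(2 * J + 3) div 2 = Suc J" "odd (2 * J + 3)" by simp_all
  then show ?thesis by (simp add: lhs_digit_def Lodd_def del: Aseq.simps)
qed

lemma lhs_value_even_eq:
  assumes "\<forall>k. [Aseq x a k = 0] (mod 3)"
  shows "lhs_value x a (2 * J + 2) = cube_head x J + linear_head x a J + 3 ^ (2 * J + 1) * cube_residue x (2 * J + 1)"
proof (induction J)
  case 0
  have "coeff (digit_poly x 1 ^ 3) 0 = x 0 ^ 3" by (simp add: coeff_0_power coeff_digit_poly)
  then show ?case
    by (simp add: lhs_value_def cube_head_def linear_head_def lhs_digit_def cube_residue_def numeral_2_eq_2)
next
  case (Suc J)
  have "lhs_value x a (2 * Suc J + 2) =
      lhs_value x a (2 * J + 2) + lhs_digit x a (2 * J + 2) * 3 ^ (2 * J + 2) + lhs_digit x a (2 * J + 3) * 3 ^ (2 * J + 3)"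
    by (simp add: lhs_value_def numeral_3_eq_3)
  moreover have "3 ^ (2 * J + 2) * Sji x (2 * Suc J) (Suc J) =
      3 ^ (2 * J + 1) * (Pkj x (2 * J + 1) (Suc J) - cube_residue x (2 * J + 1)) + 3 ^ (2 * J + 2) * cube_residue x (2 * J + 2)"
    using Sji_scaled[of "2 * Suc J" "Suc J" x] by simp
  moreover have "3 ^ (2 * J + 3) * Sji x (2 * Suc J + 1) (Suc J) =
      3 ^ (2 * J + 2) * (Pkj x (2 * J + 2) (Suc J) - cube_residue x (2 * J + 2)) + 3 ^ (2 * J + 3) * cube_residue x (2 * J + 3)"
    using Sji_scaled[of "2 * Suc J + 1" "Suc J" x] by (simp add: numeral_3_eq_3)
  ultimately show ?case
    unfolding Suc.IH cube_head_Suc linear_head_Suc lhs_digit_even lhs_digit_odd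
    using Aseq_cross_term[OF assms, of J]
    by (simp add: algebra_simps power_add numeral_3_eq_3 del: Aseq.simps)
qed

definition cubic_trunc :: "(nat \<Rightarrow> int) \<Rightarrow> (nat \<Rightarrow> int) \<Rightarrow> nat \<Rightarrow> int" where
  "cubic_trunc x a N = trunc3 x N ^ 3 + 3 * trunc3 a N * trunc3 x N"

lemma cubic_trunc_cong: "m \<le> N \<Longrightarrow> [cubic_trunc x a N = cubic_trunc x a m] (mod 3 ^ m)"
  unfolding cubic_trunc_def by (intro cong_add cong_mult cong_pow trunc3_cong cong_refl)

lemma cube_head_cong:
  "[cube_head x J + 3 ^ (2 * J + 1) * cube_residue x (2 * J + 1) = trunc3 x (Suc J) ^ 3] (mod 3 ^ (2 * J + 2))"
proof -
  define q where "q = digit_poly x (Suc J) ^ 3"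
  have "degree q < 3 * J + 2"
    using degree_power_le[of "digit_poly x (Suc J)" 3] degree_digit_poly[of x J]
    unfolding q_def by linarith
  then have "trunc3 x (Suc J) ^ 3 = (\<Sum>n<3 * J + 2. coeff q n * 3 ^ n)"
    unfolding q_def poly_digit_poly_3[symmetric] poly_power[symmetric]
    by (rule poly_eq_sum_coeff_lessThan)
  also have "[\<dots> = (\<Sum>n<2 * J + 2. coeff q n * 3 ^ n)] (mod 3 ^ (2 * J + 2))"
    by (rule sum_lessThan_power_cong) simp
  also have "(\<Sum>n<2 * J + 2. coeff q n * 3 ^ n) = cube_head x J + 3 ^ (2 * J + 1) * coeff q (2 * J + 1)"
  proof -
    have "2 * J + 2 = Suc (2 * J + 1)" by simp
    then show ?thesis
      unfolding cube_head_def q_def sum.lessThan_Suc by (simp add: lessThan_Suc_atMost mult.commute)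
  qed
  also have "[\<dots> = cube_head x J + 3 ^ (2 * J + 1) * cube_residue x (2 * J + 1)] (mod 3 ^ (2 * J + 2))"
  proof -
    have "3 dvd coeff q (2 * J + 1) - cube_residue x (2 * J + 1)"
      using Pkj_cong_cube_residue[of "2 * J + 1" "Suc J" x] by (simp add: Pkj_eq_coeff_cube q_def)
    then obtain t where t: "coeff q (2 * J + 1) - cube_residue x (2 * J + 1) = 3 * t" ..
    have "3 ^ (2 * J + 1) * coeff q (2 * J + 1) - 3 ^ (2 * J + 1) * cube_residue x (2 * J + 1)
        = 3 ^ (2 * J + 1) * (coeff q (2 * J + 1) - cube_residue x (2 * J + 1))"
      by (rule right_diff_distrib[symmetric])
    also have "\<dots> = 3 ^ (2 * J + 2) * t" unfolding t by simp
    finally show ?thesis unfolding cong_iff_dvd_diff by simp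
  qed
  finally show ?thesis by (rule cong_sym)
qed

lemma trunc3_product:
  "3 * trunc3 a N * trunc3 x M = (\<Sum>l<M. \<Sum>i<N. a i * x l * 3 ^ (i + l + 1))"
proof -
  have "trunc3 a N * trunc3 x M = (\<Sum>i<N. \<Sum>l<M. (a i * 3 ^ i) * (x l * 3 ^ l))"
    unfolding trunc3_def by (rule sum_product)
  then have "3 * trunc3 a N * trunc3 x M = 3 * (\<Sum>i<N. \<Sum>l<M. (a i * 3 ^ i) * (x l * 3 ^ l))"
    by simp
  also have "\<dots> = (\<Sum>i<N. \<Sum>l<M. a i * x l * 3 ^ (i + l + 1))"
    unfolding sum_distrib_left by (intro sum.cong refl) (simp add: power_add algebra_simps)
  finally show ?thesis by (simp add: sum.swap[of _ "{..<N}"])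
qed

lemma linear_head_cong:
  "[linear_head x a J = 3 * trunc3 a (2 * J + 1) * trunc3 x (Suc J)] (mod 3 ^ (2 * J + 2))"
proof -
  define f where "f i l = a i * x l * 3 ^ (i + l + 1)" for i l
  have "3 * trunc3 a (2 * J + 1) * trunc3 x (Suc J) - linear_head x a J
      = (\<Sum>l\<le>J. (\<Sum>i<2 * J + 1. f i l) - (\<Sum>i\<le>2 * J - l. f i l))"
    unfolding trunc3_product linear_head_def f_def lessThan_Suc_atMost sum_subtractf ..
  also have "\<dots> = (\<Sum>l\<le>J. \<Sum>i\<in>{..<2 * J + 1} - {..2 * J - l}. f i l)"
    by (intro sum.cong refl, subst sum_diff) auto
  finally have "3 * trunc3 a (2 * J + 1) * trunc3 x (Suc J) - linear_head x a J
      = (\<Sum>l\<le>J. \<Sum>i\<in>{..<2 * J + 1} - {..2 * J - l}. f i l)" .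
  moreover have "3 ^ (2 * J + 2) dvd (\<Sum>l\<le>J. \<Sum>i\<in>{..<2 * J + 1} - {..2 * J - l}. f i l)"
    unfolding f_def
  proof (intro dvd_sum)
    fix l i assume "l \<in> {..J}" "i \<in> {..<2 * J + 1} - {..2 * J - l}"
    then have "2 * J + 2 \<le> i + l + 1" by auto
    then show "3 ^ (2 * J + 2) dvd a i * x l * 3 ^ (i + l + 1)"
      by (intro dvd_mult le_imp_power_dvd)
  qed
  ultimately have "[3 * trunc3 a (2 * J + 1) * trunc3 x (Suc J) = linear_head x a J] (mod 3 ^ (2 * J + 2))"
    by (simp only: cong_iff_dvd_diff)
  then show ?thesis by (rule cong_sym)
qed

lemma cubic_perturbation_cong:
  fixes X Y \<alpha> e :: int
  assumes "3 ^ s dvd Y" "3 ^ s dvd X ^ 2 + \<alpha>" "3 ^ (2 * s - 1) dvd e" "1 \<le> s"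
  shows "[(X + Y) ^ 3 + 3 * (\<alpha> + e) * (X + Y) = X ^ 3 + 3 * \<alpha> * X] (mod 3 ^ (2 * s))"
proof -
  obtain y h f where y: "Y = 3 ^ s * y" and h: "X ^ 2 + \<alpha> = 3 ^ s * h" and f: "e = 3 ^ (2 * s - 1) * f"
    using assms(1-3) by (meson dvdE)
  have p: "(3::int) ^ (2 * s) = 3 ^ s * 3 ^ s" by (simp add: mult_2 power_add)
  also have "\<dots> = 3 * 3 ^ (2 * s - 1)"
    using assms(4) by (simp add: mult_2 flip: power_add power_Suc)
  finally have e: "3 * e = 3 ^ s * 3 ^ s * f" unfolding f p by simp
  have "(X + Y) ^ 3 + 3 * (\<alpha> + e) * (X + Y) - (X ^ 3 + 3 * \<alpha> * X)
      = 3 * Y * (X ^ 2 + \<alpha>) + 3 * X * Y ^ 2 + Y ^ 3 + (3 * e) * (X + Y)"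
    by (simp add: algebra_simps power2_eq_square power3_eq_cube)
  also have "\<dots> = 3 ^ s * 3 ^ s * (3 * y * h + 3 * X * y ^ 2 + 3 ^ s * y ^ 3 + f * (X + Y))"
    unfolding h e unfolding y by (simp add: algebra_simps power2_eq_square power3_eq_cube)
  finally show ?thesis unfolding p cong_iff_dvd_diff by simp
qed

lemma lhs_value_cong_even:
  assumes "\<forall>k. [Aseq x a k = 0] (mod 3)"
  shows "[lhs_value x a (2 * J + 2) = cubic_trunc x a (2 * J + 2)] (mod 3 ^ (2 * J + 2))"
proof -
  define X where "X = trunc3 x (Suc J)"
  define Y where "Y = trunc3 x (2 * J + 2) - X"
  define \<alpha> where "\<alpha> = trunc3 a (2 * J + 1)"
  define e where "e = trunc3 a (2 * J + 2) - \<alpha>"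
  have lhs: "[lhs_value x a (2 * J + 2) = X ^ 3 + 3 * \<alpha> * X] (mod 3 ^ (2 * J + 2))"
    unfolding lhs_value_even_eq[OF assms] X_def \<alpha>_def
    using cong_add[OF cube_head_cong linear_head_cong] by (simp add: algebra_simps)
  have "[(X + Y) ^ 3 + 3 * (\<alpha> + e) * (X + Y) = X ^ 3 + 3 * \<alpha> * X] (mod 3 ^ (2 * Suc J))"
  proof (rule cubic_perturbation_cong)
    show "3 ^ Suc J dvd Y"
      using trunc3_cong[of "Suc J" "2 * J + 2" x] by (simp add: X_def Y_def cong_iff_dvd_diff)
    show "3 ^ Suc J dvd X ^ 2 + \<alpha>"
      unfolding X_def \<alpha>_def by (rule square_plus_trunc3_dvd[OF assms]) simp
    show "3 ^ (2 * Suc J - 1) dvd e"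
      by (simp add: e_def \<alpha>_def trunc3_Suc[of a "2 * J + 1", simplified])
  qed simp
  moreover have "(X + Y) ^ 3 + 3 * (\<alpha> + e) * (X + Y) = cubic_trunc x a (2 * J + 2)"
    by (simp add: cubic_trunc_def X_def Y_def \<alpha>_def e_def)
  moreover have "2 * Suc J = 2 * J + 2" by simp
  ultimately have "[cubic_trunc x a (2 * J + 2) = X ^ 3 + 3 * \<alpha> * X] (mod 3 ^ (2 * J + 2))"
    by (simp only:)
  then show ?thesis by (rule cong_trans[OF lhs cong_sym])
qed

lemma lhs_value_cong:
  assumes "\<forall>k. [Aseq x a k = 0] (mod 3)"
  shows "[lhs_value x a N = cubic_trunc x a N] (mod 3 ^ N)"
proof -
  consider "N = 0" | J where "N = 2 * J + 2" | J where "N = 2 * J + 1"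
  proof -
    have "N = 0 \<or> (\<exists>J. N = 2 * J + 2) \<or> (\<exists>J. N = 2 * J + 1)" by presburger
    then show thesis using that by blast
  qed
  then show ?thesis
  proof cases
    case 1
    then show ?thesis by simp
  next
    case (2 J)
    then show ?thesis using lhs_value_cong_even[OF assms] by simp
  next
    case (3 J)
    have "[lhs_value x a (2 * J + 1) = lhs_value x a (2 * J + 2)] (mod 3 ^ (2 * J + 1))"
      unfolding lhs_value_def by (rule cong_sym, rule sum_lessThan_power_cong) simp
    also have "[lhs_value x a (2 * J + 2) = cubic_trunc x a (2 * J + 2)] (mod 3 ^ (2 * J + 1))"
      using lhs_value_cong_even[OF assms] by (rule cong_dvd_modulus) (simp add: le_imp_power_dvd)
    also have "[cubic_trunc x a (2 * J + 2) = cubic_trunc x a (2 * J + 1)] (mod 3 ^ (2 * J + 1))"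
      by (rule cubic_trunc_cong) simp
    finally show ?thesis using 3 by simp
  qed
qed

section \<open>Carries\<close>

lemma carry_sum_eq:
  fixes L b M :: "nat \<Rightarrow> int"
  assumes "M 0 = 0" "\<And>k. M (Suc k) = (L k + M k - b k) div q"
    and "\<forall>k<N. [L k + M k = b k] (mod q)"
  shows "(\<Sum>k<N. (L k - b k) * q ^ k) = q ^ N * M N"
  using assms(3)
proof (induction N)
  case (Suc N)
  have "q dvd L N + M N - b N" using Suc.prems by (simp add: cong_iff_dvd_diff)
  then have carry: "q * M (Suc N) = L N + M N - b N" by (simp add: assms(2))
  have "(\<Sum>k<Suc N. (L k - b k) * q ^ k) = q ^ N * (L N + M N - b N)"
    using Suc by (simp add: algebra_simps)
  also have "\<dots> = q ^ Suc N * M (Suc N)"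
    by (simp add: carry[symmetric] ac_simps)
  finally show ?case .
qed (simp add: assms(1))

lemma carry_congs_iff_dvd:
  fixes L b M :: "nat \<Rightarrow> int"
  assumes "q \<noteq> 0" "M 0 = 0" "\<And>k. M (Suc k) = (L k + M k - b k) div q"
  shows "(\<forall>k<N. [L k + M k = b k] (mod q)) \<longleftrightarrow> q ^ N dvd (\<Sum>k<N. (L k - b k) * q ^ k)"
proof (induction N)
  case (Suc N)
  show ?case
  proof (cases "\<forall>k<N. [L k + M k = b k] (mod q)")
    case True
    then have "(\<Sum>k<Suc N. (L k - b k) * q ^ k) = q ^ N * (L N + M N - b N)"
      using carry_sum_eq[OF assms(2,3)] by (simp add: algebra_simps)
    then show ?thesis
      using True assms(1) by (simp add: less_Suc_eq cong_iff_dvd_diff mult.commute[of q])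
  next
    case False
    have "\<not> q ^ Suc N dvd (\<Sum>k<Suc N. (L k - b k) * q ^ k)"
    proof
      assume "q ^ Suc N dvd (\<Sum>k<Suc N. (L k - b k) * q ^ k)"
      then have "q ^ N dvd (\<Sum>k<Suc N. (L k - b k) * q ^ k)"
        by (rule dvd_trans[OF le_imp_power_dvd, rotated]) simp
      then have "q ^ N dvd (\<Sum>k<N. (L k - b k) * q ^ k) + (L N - b N) * q ^ N"
        by simp
      then have "q ^ N dvd (\<Sum>k<N. (L k - b k) * q ^ k)" by (simp add: dvd_add_left_iff)
      with False Suc.IH show False by blast
    qed
    with False show ?thesis by (auto simp: less_Suc_eq)
  qed
qed simp

lemma Mk_Suc: "Mk x a b (Suc k) = (lhs_digit x a k + Mk x a b k - b k) div 3"
proof -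
  have "k = 0 \<or> k = 1 \<or> (\<exists>n. k = 2 * n + 2) \<or> (\<exists>n. k = 2 * n + 3)" by presburger
  then show ?thesis
    by (elim disjE exE)
      (simp_all add: Mk_def lhs_digit_def Leven_def Lodd_def Let_def numeral_3_eq_3 del: Aseq.simps)
qed

lemma all_nat_parity_iff: "(\<forall>k::nat. P k) \<longleftrightarrow> P 0 \<and> P 1 \<and> (\<forall>j\<ge>1. P (2 * j) \<and> P (2 * j + 1))"
proof (intro iffI allI)
  fix k :: nat assume "P 0 \<and> P 1 \<and> (\<forall>j\<ge>1. P (2 * j) \<and> P (2 * j + 1))"
  moreover have "k = 0 \<or> k = 1 \<or> (\<exists>j. j \<ge> 1 \<and> (k = 2 * j \<or> k = 2 * j + 1))" by presburger
  ultimately show "P k" by blast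
qed simp

lemma system_iff_lhs_digit_congs:
  "([x 0 ^ 3 = b 0] (mod 3) \<and> [x 0 * a 0 + Mk x a b 1 = b 1] (mod 3) \<and>
     (\<forall>j\<ge>1. [Leven x a j (Mk x a b (2 * j)) = b (2 * j)] (mod 3) \<and>
             [Lodd x a j (Mk x a b (2 * j + 1)) = b (2 * j + 1)] (mod 3)))
   \<longleftrightarrow> (\<forall>k. [lhs_digit x a k + Mk x a b k = b k] (mod 3))"
proof -
  have "lhs_digit x a (2 * j) + m = Leven x a j m" "lhs_digit x a (2 * j + 1) + m = Lodd x a j m"
    if "j \<ge> 1" for j m
    using that by (simp_all add: lhs_digit_def Leven_def Lodd_def del: Aseq.simps)
  then show ?thesis
    unfolding all_nat_parity_iff[of "\<lambda>k. [lhs_digit x a k + Mk x a b k = b k] (mod 3)"]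
    by (simp add: lhs_digit_def Mk_def)
qed

lemma lhs_value_cong_iff_carry_congs:
  "[lhs_value x a N = trunc3 b N] (mod 3 ^ N) \<longleftrightarrow>
   (\<forall>k<N. [lhs_digit x a k + Mk x a b k = b k] (mod 3))"
proof -
  have diff: "lhs_value x a N - trunc3 b N = (\<Sum>k<N. (lhs_digit x a k - b k) * 3 ^ k)"
    by (simp add: lhs_value_def trunc3_def sum_subtractf left_diff_distrib)
  show ?thesis
    unfolding cong_iff_dvd_diff[of "lhs_value x a N"] diff
    by (intro carry_congs_iff_dvd[symmetric] Mk_Suc) (simp_all add: Mk_def)
qed

theorem theorem3p9:
  fixes x a b :: "nat \<Rightarrow> int"
  assumes "digits3 a" and "a 0 \<noteq> 0"
    and "digits3 b" and "b 0 \<noteq> 0"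
    and "digits3 x" and "x 0 \<noteq> 0"
    and "\<forall>k. [Aseq x a k = 0] (mod 3)"
  shows "is_solution x a b \<longleftrightarrow>
    ([x 0 ^ 3 = b 0] (mod 3) \<and>
     [x 0 * a 0 + Mk x a b 1 = b 1] (mod 3) \<and>
     (\<forall>j\<ge>1. [Leven x a j (Mk x a b (2 * j)) = b (2 * j)] (mod 3) \<and>
             [Lodd x a j (Mk x a b (2 * j + 1)) = b (2 * j + 1)] (mod 3)))"
proof -
  have "is_solution x a b \<longleftrightarrow> (\<forall>N. [lhs_value x a N = trunc3 b N] (mod 3 ^ N))"
    unfolding is_solution_def cubic_trunc_def[symmetric]
    using lhs_value_cong[OF assms(7)] by (meson cong_sym cong_trans)
  also have "\<dots> \<longleftrightarrow> (\<forall>N. \<forall>k<N. [lhs_digit x a k + Mk x a b k = b k] (mod 3))"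
    by (simp add: lhs_value_cong_iff_carry_congs)
  also have "\<dots> \<longleftrightarrow> (\<forall>k. [lhs_digit x a k + Mk x a b k = b k] (mod 3))"
    by (meson lessI)
  finally show ?thesis
    unfolding system_iff_lhs_digit_congs .
qed

end
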